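(* Let $(\bar{A}_{\tau,\sigma},\bar{B}_\tau,B_\tau,C_\tau)$ be csRKN coefficients satisfying, for all $\tau,\sigma\in[0,1]$, $$C_\tau=1-C_{1-\tau},\ \ \bar{A}_{\tau,\sigma}=B_{1-\sigma}(1-C_{1-\tau})-\bar{B}_{1-\sigma}+\bar{A}_{1-\tau,1-\sigma},\ \ \bar{B}_\tau=B_{1-\tau}-\bar{B}_{1-\tau},\ \ B_\tau=B_{1-\tau}.$$ Let $(b_i,c_i)_{i=1}^s$ be a quadrature formula on $[0,1]$ (weights $b_i$, nodes $c_i$) with $b_{s+1-i}=b_i$ and $c_{s+1-i}=1-c_i$ for all $i$. Then the $s$-stage RKN method with coefficients $$\bar{a}_{ij}=b_j\bar{A}_{c_i,c_j},\quad \bar{b}_i=b_i\bar{B}_{c_i},\quad \hat b_i=b_iB_{c_i},\quad \hat c_i=C_{c_i}\qquad(i,j=1,\dots,s)$$ is symmetric.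
   Context: For $q''=f(t,q)$ with smooth $f:\mathbb{R}\times\mathbb{R}^d\to\mathbb{R}^d$, an $s$-stage RKN method with coefficients $(\bar a_{ij},\bar b_i,\hat b_i,\hat c_i)$ and step size $h$ is $$Q_i=q_0+h\hat c_iq'_0+h^2\sum_{j=1}^s\bar a_{ij}f(t_0+\hat c_jh,Q_j),\ i=1,\dots,s,$$ $$q_1=q_0+hq'_0+h^2\sum_{i=1}^s\bar b_if(t_0+\hat c_ih,Q_i),\qquad q'_1=q'_0+h\sum_{i=1}^s\hat b_if(t_0+\hat c_ih,Q_i).$$ A one-step method $\Phi_h$ is symmetric if $\Phi_h=\Phi_{-h}^{-1}$, i.e. exchanging $h\leftrightarrow-h$, $(q_0,q_0')\leftrightarrow(q_1,q_1')$, $t_0\leftrightarrow t_1=t_0+h$ leaves the method unaltered. *)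

theory Defs
  imports "HOL-Analysis.Analysis"
begin

text \<open>One step of the s-stage RKN method (coefficients abar, bbar, bhat, chat, stages indexed 1..s)
  applied to q'' = f(t,q) with step h from (t0, q0, p0) to (q1, p1), where p denotes q'.
  Since the method is in general implicit, a step is a relation: there exist stage values Q
  satisfying the stage equations and producing (q1, p1).\<close>
definition rkn_step ::
  "nat \<Rightarrow> (nat \<Rightarrow> nat \<Rightarrow> real) \<Rightarrow> (nat \<Rightarrow> real) \<Rightarrow> (nat \<Rightarrow> real) \<Rightarrow> (nat \<Rightarrow> real)
   \<Rightarrow> (real \<Rightarrow> 'a::real_vector \<Rightarrow> 'a) \<Rightarrow> real \<Rightarrow> real \<Rightarrow> 'a \<Rightarrow> 'a \<Rightarrow> 'a \<Rightarrow> 'a \<Rightarrow> bool" where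
  "rkn_step s abar bbar bhat chat f h t0 q0 p0 q1 p1 \<longleftrightarrow>
     (\<exists>Q :: nat \<Rightarrow> 'a.
        (\<forall>i\<in>{1..s}. Q i = q0 + (h * chat i) *\<^sub>R p0
             + (h^2) *\<^sub>R (\<Sum>j=1..s. abar i j *\<^sub>R f (t0 + chat j * h) (Q j))) \<and>
        q1 = q0 + h *\<^sub>R p0 + (h^2) *\<^sub>R (\<Sum>i=1..s. bbar i *\<^sub>R f (t0 + chat i * h) (Q i)) \<and>
        p1 = p0 + h *\<^sub>R (\<Sum>i=1..s. bhat i *\<^sub>R f (t0 + chat i * h) (Q i)))"

definition rkn_symmetric_for ::
  "nat \<Rightarrow> (nat \<Rightarrow> nat \<Rightarrow> real) \<Rightarrow> (nat \<Rightarrow> real) \<Rightarrow> (nat \<Rightarrow> real) \<Rightarrow> (nat \<Rightarrow> real)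
   \<Rightarrow> (real \<Rightarrow> 'a::real_vector \<Rightarrow> 'a) \<Rightarrow> bool" where
  "rkn_symmetric_for s abar bbar bhat chat f \<longleftrightarrow>
     (\<forall>h t0 q0 p0 q1 p1.
        rkn_step s abar bbar bhat chat f h t0 q0 p0 q1 p1 \<longleftrightarrow>
        rkn_step s abar bbar bhat chat f (-h) (t0 + h) q1 p1 q0 p0)"

end

theory Submission
  imports Defs
begin

text \<open>Reflecting the stage indices, \<open>i \<mapsto> s + 1 - i\<close>, turns the stage values of a step
  of size \<open>h\<close> from \<open>(t\<^sub>0, q\<^sub>0, q'\<^sub>0)\<close> to \<open>(q\<^sub>1, q'\<^sub>1)\<close> into stage values of the step of
  size \<open>-h\<close> from \<open>(t\<^sub>0 + h, q\<^sub>1, q'\<^sub>1)\<close> back to \<open>(q\<^sub>0, q'\<^sub>0)\<close>, as soon as the coefficients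
  satisfy the classical discrete symmetry conditions. For the method built from a csRKN method
  and a symmetric quadrature formula these conditions are the continuous symmetry conditions
  evaluated at the nodes, because the reflection sends the node \<open>c\<^sub>i\<close> to \<open>1 - c\<^sub>i\<close> and
  preserves the weights.\<close>

definition rkn_symmetric_coefficients ::
  "nat \<Rightarrow> (nat \<Rightarrow> nat \<Rightarrow> real) \<Rightarrow> (nat \<Rightarrow> real) \<Rightarrow> (nat \<Rightarrow> real) \<Rightarrow> (nat \<Rightarrow> real) \<Rightarrow> bool" where
  "rkn_symmetric_coefficients s a bb bh ch \<longleftrightarrow>
     (\<forall>i\<in>{1..s}. ch (s + 1 - i) = 1 - ch i \<and> bh (s + 1 - i) = bh i \<and>
        bb (s + 1 - i) = bh i - bb i \<and>
        (\<forall>j\<in>{1..s}. a (s + 1 - i) j = bb j - ch i * bh j + a i (s + 1 - j)))"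

lemma sum_reflected_stages:
  fixes f :: "real \<Rightarrow> 'a::real_vector \<Rightarrow> 'a" and w ch :: "nat \<Rightarrow> real"
  assumes ch: "\<forall>i\<in>{1..s}. ch (s + 1 - i) = 1 - ch i"
  shows "(\<Sum>j=1..s. w j *\<^sub>R f (t0 + h + ch j * - h) (Q (s + 1 - j)))
       = (\<Sum>k=1..s. w (s + 1 - k) *\<^sub>R f (t0 + ch k * h) (Q k))"
proof -
  have "(\<Sum>j=1..s. w j *\<^sub>R f (t0 + h + ch j * - h) (Q (s + 1 - j)))
      = (\<Sum>j=1..s. w j *\<^sub>R f (t0 + ch (s + 1 - j) * h) (Q (s + 1 - j)))"
  proof (intro sum.cong refl)
    fix j assume "j \<in> {1..s}"
    with ch have ch_j: "ch (s + 1 - j) = 1 - ch j" by blast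
    have t_eq: "t0 + h + ch j * - h = t0 + ch (s + 1 - j) * h"
      unfolding ch_j by (simp add: algebra_simps)
    show "w j *\<^sub>R f (t0 + h + ch j * - h) (Q (s + 1 - j))
        = w j *\<^sub>R f (t0 + ch (s + 1 - j) * h) (Q (s + 1 - j))" by (simp only: t_eq)
  qed
  also have "\<dots> = (\<Sum>k=1..s. w (s + 1 - k) *\<^sub>R f (t0 + ch k * h) (Q k))"
    by (subst sum.atLeastAtMost_rev) (auto intro: sum.cong)
  finally show ?thesis .
qed

lemma rkn_step_reflect:
  fixes f :: "real \<Rightarrow> 'a::real_vector \<Rightarrow> 'a"
  assumes sym: "rkn_symmetric_coefficients s a bb bh ch"
    and step: "rkn_step s a bb bh ch f h t0 q0 p0 q1 p1"
  shows "rkn_step s a bb bh ch f (-h) (t0 + h) q1 p1 q0 p0"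
proof -
  obtain Q where
    stages: "\<forall>i\<in>{1..s}. Q i = q0 + (h * ch i) *\<^sub>R p0
             + (h^2) *\<^sub>R (\<Sum>j=1..s. a i j *\<^sub>R f (t0 + ch j * h) (Q j))" and
    q1: "q1 = q0 + h *\<^sub>R p0 + (h^2) *\<^sub>R (\<Sum>i=1..s. bb i *\<^sub>R f (t0 + ch i * h) (Q i))" and
    p1: "p1 = p0 + h *\<^sub>R (\<Sum>i=1..s. bh i *\<^sub>R f (t0 + ch i * h) (Q i))"
    using step unfolding rkn_step_def by blast
  define F where "F k = f (t0 + ch k * h) (Q k)" for k
  define Fbb where "Fbb = (\<Sum>k=1..s. bb k *\<^sub>R F k)"
  define Fbh where "Fbh = (\<Sum>k=1..s. bh k *\<^sub>R F k)"
  have ch: "\<forall>i\<in>{1..s}. ch (s + 1 - i) = 1 - ch i"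
    using sym unfolding rkn_symmetric_coefficients_def by blast
  have reflect: "(\<Sum>j=1..s. w j *\<^sub>R f (t0 + h + ch j * - h) (Q (s + 1 - j)))
      = (\<Sum>k=1..s. w (s + 1 - k) *\<^sub>R F k)" for w
    unfolding F_def by (rule sum_reflected_stages[OF ch])
  show ?thesis unfolding rkn_step_def
  proof (intro exI[of _ "\<lambda>i. Q (s + 1 - i)"] conjI ballI)
    fix i assume i: "i \<in> {1..s}"
    define A where "A = (\<Sum>k=1..s. a i (s + 1 - k) *\<^sub>R F k)"
    from i have "s + 1 - i \<in> {1..s}" by auto
    with stages have "Q (s + 1 - i)
        = q0 + (h * ch (s + 1 - i)) *\<^sub>R p0 + h\<^sup>2 *\<^sub>R (\<Sum>k=1..s. a (s + 1 - i) k *\<^sub>R F k)"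
      unfolding F_def by (rule bspec)
    also have "ch (s + 1 - i) = 1 - ch i" using ch i by blast
    also have "(\<Sum>k=1..s. a (s + 1 - i) k *\<^sub>R F k)
        = (\<Sum>k=1..s. bb k *\<^sub>R F k - ch i *\<^sub>R (bh k *\<^sub>R F k) + a i (s + 1 - k) *\<^sub>R F k)"
      using sym i by (intro sum.cong)
        (auto simp: rkn_symmetric_coefficients_def scaleR_add_left scaleR_diff_left)
    also have "\<dots> = Fbb - ch i *\<^sub>R Fbh + A"
      unfolding Fbb_def Fbh_def A_def by (simp add: sum.distrib sum_subtractf scaleR_sum_right)
    finally have "Q (s + 1 - i) = q0 + (h * (1 - ch i)) *\<^sub>R p0 + h\<^sup>2 *\<^sub>R (Fbb - ch i *\<^sub>R Fbh + A)" .
    then show "Q (s + 1 - i) = q1 + (- h * ch i) *\<^sub>R p1 +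
        (- h)\<^sup>2 *\<^sub>R (\<Sum>j=1..s. a i j *\<^sub>R f (t0 + h + ch j * - h) (Q (s + 1 - j)))"
      unfolding reflect A_def[symmetric] q1 p1 Fbb_def[symmetric, unfolded F_def]
        Fbh_def[symmetric, unfolded F_def]
      by (simp add: scaleR_add_right scaleR_diff_right scaleR_diff_left power2_eq_square
          algebra_simps)
  next
    have "(\<Sum>k=1..s. bb (s + 1 - k) *\<^sub>R F k) = (\<Sum>k=1..s. bh k *\<^sub>R F k - bb k *\<^sub>R F k)"
      using sym by (intro sum.cong) (auto simp: rkn_symmetric_coefficients_def scaleR_diff_left)
    also have "\<dots> = Fbh - Fbb"
      unfolding Fbb_def Fbh_def by (simp add: sum_subtractf)
    finally have bb_reflect: "(\<Sum>k=1..s. bb (s + 1 - k) *\<^sub>R F k) = Fbh - Fbb" .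
    show "q0 = q1 + - h *\<^sub>R p1 +
        (- h)\<^sup>2 *\<^sub>R (\<Sum>i=1..s. bb i *\<^sub>R f (t0 + h + ch i * - h) (Q (s + 1 - i)))"
      unfolding reflect bb_reflect q1 p1 Fbb_def[symmetric, unfolded F_def] Fbh_def[symmetric, unfolded F_def]
      by (simp add: scaleR_add_right scaleR_diff_right power2_eq_square algebra_simps)
  next
    have "(\<Sum>k=1..s. bh (s + 1 - k) *\<^sub>R F k) = Fbh"
      using sym unfolding Fbh_def by (intro sum.cong) (auto simp: rkn_symmetric_coefficients_def)
    then show "p0 = p1 + - h *\<^sub>R (\<Sum>i=1..s. bh i *\<^sub>R f (t0 + h + ch i * - h) (Q (s + 1 - i)))"
      unfolding reflect p1 Fbh_def[symmetric, unfolded F_def] by simp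
  qed
qed

lemma rkn_symmetric_for_if_symmetric_coefficients:
  assumes "rkn_symmetric_coefficients s a bb bh ch"
  shows "rkn_symmetric_for s a bb bh ch f"
  unfolding rkn_symmetric_for_def
proof (intro allI iffI)
  fix h t0 q0 p0 q1 p1
  show "rkn_step s a bb bh ch f h t0 q0 p0 q1 p1 \<Longrightarrow>
      rkn_step s a bb bh ch f (- h) (t0 + h) q1 p1 q0 p0"
    by (rule rkn_step_reflect[OF assms])
  show "rkn_step s a bb bh ch f (- h) (t0 + h) q1 p1 q0 p0 \<Longrightarrow>
      rkn_step s a bb bh ch f h t0 q0 p0 q1 p1"
    using rkn_step_reflect[OF assms, of f "- h" "t0 + h" q1 p1 q0 p0] by simp
qed

lemma csrkn_discretization_symmetric_coefficients:
  fixes Abar :: "real \<Rightarrow> real \<Rightarrow> real" and Bbar B C :: "real \<Rightarrow> real"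
    and b c :: "nat \<Rightarrow> real"
  assumes hC: "\<And>\<tau>. \<tau> \<in> {0..1} \<Longrightarrow> C \<tau> = 1 - C (1 - \<tau>)"
    and hA: "\<And>\<tau> \<sigma>. \<tau> \<in> {0..1} \<Longrightarrow> \<sigma> \<in> {0..1} \<Longrightarrow>
             Abar \<tau> \<sigma> = B (1 - \<sigma>) * (1 - C (1 - \<tau>)) - Bbar (1 - \<sigma>) + Abar (1 - \<tau>) (1 - \<sigma>)"
    and hBbar: "\<And>\<tau>. \<tau> \<in> {0..1} \<Longrightarrow> Bbar \<tau> = B (1 - \<tau>) - Bbar (1 - \<tau>)"
    and hB: "\<And>\<tau>. \<tau> \<in> {0..1} \<Longrightarrow> B \<tau> = B (1 - \<tau>)"
    and nodes: "\<And>i. i \<in> {1..s} \<Longrightarrow> c i \<in> {0..1}"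
    and symb: "\<And>i. i \<in> {1..s} \<Longrightarrow> b (s + 1 - i) = b i"
    and symc: "\<And>i. i \<in> {1..s} \<Longrightarrow> c (s + 1 - i) = 1 - c i"
  shows "rkn_symmetric_coefficients s (\<lambda>i j. b j * Abar (c i) (c j)) (\<lambda>i. b i * Bbar (c i))
           (\<lambda>i. b i * B (c i)) (\<lambda>i. C (c i))"
  unfolding rkn_symmetric_coefficients_def
proof (intro ballI conjI)
  fix i assume i: "i \<in> {1..s}"
  have ci: "c i \<in> {0..1}" "1 - c i \<in> {0..1}" using nodes[OF i] by auto
  show "C (c (s + 1 - i)) = 1 - C (c i)"
    using hC[OF ci(1)] symc[OF i] by simp
  show "b (s + 1 - i) * B (c (s + 1 - i)) = b i * B (c i)"
    using hB[OF ci(1)] symb[OF i] symc[OF i] by simp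
  show "b (s + 1 - i) * Bbar (c (s + 1 - i)) = b i * B (c i) - b i * Bbar (c i)"
    unfolding symb[OF i] symc[OF i] hB[OF ci(1)] hBbar[OF ci(1)] by (simp add: algebra_simps)
  fix k assume k: "k \<in> {1..s}"
  have ck: "c k \<in> {0..1}" using nodes[OF k] by auto
  have abar_reflected: "Abar (1 - c i) (c k) = Bbar (c k) - C (c i) * B (c k) + Abar (c i) (1 - c k)"
    using hA[OF ci(2) ck] hBbar[OF ck] hB[OF ck] by (simp add: algebra_simps)
  show "b k * Abar (c (s + 1 - i)) (c k)
      = b k * Bbar (c k) - C (c i) * (b k * B (c k)) + b (s + 1 - k) * Abar (c i) (c (s + 1 - k))"
    unfolding symc[OF i] symc[OF k] symb[OF k] abar_reflected by (simp add: algebra_simps)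
qed

theorem theorem4p1:
  fixes Abar :: "real \<Rightarrow> real \<Rightarrow> real" and Bbar B C :: "real \<Rightarrow> real"
    and s :: nat and b c :: "nat \<Rightarrow> real"
  assumes hC: "\<And>\<tau>. \<tau> \<in> {0..1} \<Longrightarrow> C \<tau> = 1 - C (1 - \<tau>)"
    and hA: "\<And>\<tau> \<sigma>. \<tau> \<in> {0..1} \<Longrightarrow> \<sigma> \<in> {0..1} \<Longrightarrow>
             Abar \<tau> \<sigma> = B (1 - \<sigma>) * (1 - C (1 - \<tau>)) - Bbar (1 - \<sigma>) + Abar (1 - \<tau>) (1 - \<sigma>)"
    and hBbar: "\<And>\<tau>. \<tau> \<in> {0..1} \<Longrightarrow> Bbar \<tau> = B (1 - \<tau>) - Bbar (1 - \<tau>)"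
    and hB: "\<And>\<tau>. \<tau> \<in> {0..1} \<Longrightarrow> B \<tau> = B (1 - \<tau>)"
    and nodes: "\<And>i. i \<in> {1..s} \<Longrightarrow> c i \<in> {0..1}"
    and symb: "\<And>i. i \<in> {1..s} \<Longrightarrow> b (s + 1 - i) = b i"
    and symc: "\<And>i. i \<in> {1..s} \<Longrightarrow> c (s + 1 - i) = 1 - c i"
  shows "\<forall>f :: real \<Rightarrow> real^'d \<Rightarrow> real^'d.
           rkn_symmetric_for s (\<lambda>i j. b j * Abar (c i) (c j)) (\<lambda>i. b i * Bbar (c i))
             (\<lambda>i. b i * B (c i)) (\<lambda>i. C (c i)) f"
proof -
  from hC hA hBbar hB nodes symb symc
  have "rkn_symmetric_coefficients s (\<lambda>i j. b j * Abar (c i) (c j)) (\<lambda>i. b i * Bbar (c i))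
      (\<lambda>i. b i * B (c i)) (\<lambda>i. C (c i))"
    by (rule csrkn_discretization_symmetric_coefficients)
  then show ?thesis by (blast intro: rkn_symmetric_for_if_symmetric_coefficients)
qed

end
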